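(* Let $p\in(0,1)$, $\gamma>0$, $B>0$, $w,N\in\mathbb{N}$, let $(\xi_j^{(N)*})_{j=1}^N$ be the unique maximizer of $\mathcal{T}_N$, and let $B^{(N)}=B-\sum_{i=1}^N\xi_i^{(N)*}$. Then $$\xi_N^{(N)*}=\frac{B^{(N)}}{w},$$ and for every $j\in\{1,\dots,N-1\}$, $$\frac{1-p}{1+\gamma\xi_{j+1}^{(N)*}}=\frac{1}{1+\gamma\xi_j^{(N)*}}-\frac{p}{1+\frac{\gamma}{w}\left(B-\sum_{i=1}^{j}\xi_i^{(N)*}\right)}.$$
   Context: Logarithms are base 2. For an admissible (nonnegative, with sum at most $B$) sequence $(x_j)_{j\ge1}$, $$\mathcal{T}_\infty(x_1,x_2,\dots)=\sum_{k=1}^{w}p^2(1-p)^{k-1}\frac{k}{2}\log_2\!\Big(1+\gamma\frac{B}{k}\Big)+\sum_{j=1}^{\infty}p(1-p)^{j+w-1}\frac12\log_2(1+\gamma x_j)+\sum_{k=1}^{\infty}p^2(1-p)^{k+w-1}\frac{w}{2}\log_2\!\Big(1+\gamma\frac{B-\sum_{j=1}^{k}x_j}{w}\Big).$$ For $N\in\mathbb{N}$ and $\xi_1,\dots,\xi_N\ge0$ with $\sum_{j=1}^N\xi_j\le B$, define $\mathcal{T}_N(\xi_1,\dots,\xi_N)=\mathcal{T}_\infty(\xi_1,\dots,\xi_N,0,0,\dots)$. $\mathcal{T}_N$ has a unique maximizer over this compact set, denoted $(\xi_j^{(N)*})_{j=1}^N$. *)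

theory Defs
  imports "HOL-Analysis.Analysis"
begin

text \<open>Sequences are functions nat => real; only indices j >= 1 are used
  (x 0 is ignored), matching the paper's indexing (x_j)_{j>=1}.\<close>

definition T_inf :: "real \<Rightarrow> real \<Rightarrow> real \<Rightarrow> nat \<Rightarrow> (nat \<Rightarrow> real) \<Rightarrow> real" where
  "T_inf p \<gamma> B w x =
     (\<Sum>k=1..w. p\<^sup>2 * (1 - p) ^ (k - 1) * (real k / 2) * log 2 (1 + \<gamma> * B / real k))
   + (\<Sum>j. p * (1 - p) ^ (Suc j + w - 1) * (1/2) * log 2 (1 + \<gamma> * x (Suc j)))
   + (\<Sum>k. p\<^sup>2 * (1 - p) ^ (Suc k + w - 1) * (real w / 2)
          * log 2 (1 + \<gamma> * (B - (\<Sum>j=1..Suc k. x j)) / real w))"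

definition T_N :: "real \<Rightarrow> real \<Rightarrow> real \<Rightarrow> nat \<Rightarrow> nat \<Rightarrow> (nat \<Rightarrow> real) \<Rightarrow> real" where
  "T_N p \<gamma> B w N \<xi> = T_inf p \<gamma> B w (\<lambda>j. if 1 \<le> j \<and> j \<le> N then \<xi> j else 0)"

definition feasible_N :: "real \<Rightarrow> nat \<Rightarrow> (nat \<Rightarrow> real) \<Rightarrow> bool" where
  "feasible_N B N \<xi> \<longleftrightarrow> (\<forall>j\<in>{1..N}. 0 \<le> \<xi> j) \<and> (\<Sum>j=1..N. \<xi> j) \<le> B"

definition is_maximizer_N :: "real \<Rightarrow> real \<Rightarrow> real \<Rightarrow> nat \<Rightarrow> nat \<Rightarrow> (nat \<Rightarrow> real) \<Rightarrow> bool" where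
  "is_maximizer_N p \<gamma> B w N \<xi> \<longleftrightarrow> feasible_N B N \<xi> \<and>
     (\<forall>\<eta>. feasible_N B N \<eta> \<longrightarrow> T_N p \<gamma> B w N \<eta> \<le> T_N p \<gamma> B w N \<xi>)"

end

theory Submission
  imports Defs
begin

(* Summing the geometric tail, T_N is a positive affine function of
     F(xi) = sum_{j<=N} q^j ln(1 + gamma xi_j)
             + w (sum_{k<N} p q^k ln(1 + gamma R_k / w) + q^N ln(1 + gamma R_N / w)),
   where q = 1 - p and R_k = B - (xi_1 + ... + xi_k) is the budget left after k steps.
   At a maximizer, the one-sided derivatives of F along feasible directions have a
   definite sign. Two families of directions suffice: moving xi_N against the unused
   budget R_N, and shifting mass between xi_j and xi_(j+1). Their signs first force
   R_N > 0 and every xi_j > 0; then all these directions are two-sided, so the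
   derivatives vanish, and the vanishing derivatives are exactly the two identities. *)

lemma DERIV_nonpos_at_right_max:
  fixes f :: "real \<Rightarrow> real"
  assumes "(f has_real_derivative D) (at x)" "0 < \<delta>"
    and "\<And>t. 0 < t \<Longrightarrow> t < \<delta> \<Longrightarrow> f (x + t) \<le> f x"
  shows "D \<le> 0"
proof (rule ccontr)
  assume "\<not> D \<le> 0"
  then obtain d where d: "0 < d" "\<And>h. 0 < h \<Longrightarrow> h < d \<Longrightarrow> f x < f (x + h)"
    using DERIV_pos_inc_right[OF assms(1)] by force
  have "f x < f (x + min d \<delta> / 2)" using d assms(2) by auto
  moreover have "f (x + min d \<delta> / 2) \<le> f x" using assms(2,3) d(1) by auto
  ultimately show False by simp
qed

lemma DERIV_nonneg_at_left_max:
  fixes f :: "real \<Rightarrow> real"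
  assumes "(f has_real_derivative D) (at x)" "0 < \<delta>"
    and "\<And>t. 0 < t \<Longrightarrow> t < \<delta> \<Longrightarrow> f (x - t) \<le> f x"
  shows "0 \<le> D"
proof -
  have "((\<lambda>s. f (- s)) has_real_derivative - D) (at (- x))"
    using assms(1) DERIV_mirror[where x = "- x" and f = f] by simp
  then have "- D \<le> 0"
    by (rule DERIV_nonpos_at_right_max[OF _ assms(2)]) (simp add: assms(3))
  then show ?thesis by simp
qed

definition psum :: "(nat \<Rightarrow> real) \<Rightarrow> nat \<Rightarrow> real" where
  "psum \<eta> k = (\<Sum>i=1..k. \<eta> i)"

lemma psum_line: "psum (\<lambda>i. \<xi> i + t * v i) k = psum \<xi> k + t * psum v k"
  by (simp add: psum_def sum.distrib sum_distrib_left)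

lemma psum_truncation:
  "(\<Sum>j=1..n. if 1 \<le> j \<and> j \<le> N then \<eta> j else 0) = psum \<eta> (min n N)"
  by (induction n) (auto simp: psum_def min_def not_less_eq_eq dest: le_antisym)

definition log_objective ::
    "real \<Rightarrow> real \<Rightarrow> real \<Rightarrow> nat \<Rightarrow> nat \<Rightarrow> (nat \<Rightarrow> real) \<Rightarrow> real" where
  "log_objective p \<gamma> B w N \<eta> = (\<Sum>j=1..N. (1-p)^j * ln (1 + \<gamma> * \<eta> j))
     + real w * ((\<Sum>k=1..N-1. p * (1-p)^k * ln (1 + \<gamma> * (B - psum \<eta> k) / real w))
                 + (1-p)^N * ln (1 + \<gamma> * (B - psum \<eta> N) / real w))"

lemma geometric_weights_truncated_sums:
  fixes a :: "nat \<Rightarrow> real" and p :: real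
  assumes "0 < p" "p < 1" "1 \<le> N"
  shows "(\<lambda>k. p * (1-p)^Suc k * a (min (Suc k) N))
           sums ((\<Sum>k=1..N-1. p * (1-p)^k * a k) + (1-p)^N * a N)"
proof -
  define f where "f k = p * (1-p)^Suc k * a (min (Suc k) N)" for k
  have tail_eq: "f (n + (N-1)) = p * (1-p)^N * a N * (1-p)^n" for n
    using assms(3) by (simp add: f_def power_add mult_ac)
  have "(\<lambda>n. p * (1-p)^N * a N * (1-p)^n) sums (p * (1-p)^N * a N * (1 / (1 - (1-p))))"
    by (intro sums_mult geometric_sums) (use assms in auto)
  then have "(\<lambda>n. f (n + (N-1))) sums ((1-p)^N * a N)"
    using assms(1) unfolding tail_eq by simp
  then have "f sums ((1-p)^N * a N + (\<Sum>k<N-1. f k))"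
    by (simp only: sums_iff_shift)
  moreover have "(\<Sum>k<N-1. f k) = (\<Sum>k=1..N-1. p * (1-p)^k * a k)"
    by (simp add: f_def sum.atLeast1_atMost_eq)
  ultimately show ?thesis unfolding f_def[abs_def] by (simp add: add.commute)
qed

lemma T_inf_rate_series:
  assumes "1 \<le> w"
  shows "(\<Sum>j. p * (1-p)^(Suc j + w - 1) * (1/2)
              * log 2 (1 + \<gamma> * (if 1 \<le> Suc j \<and> Suc j \<le> N then \<eta> (Suc j) else 0)))
       = p * (1-p)^(w-1) / (2 * ln 2) * (\<Sum>j=1..N. (1-p)^j * ln (1 + \<gamma> * \<eta> j))"
proof -
  have "(\<Sum>j. p * (1-p)^(Suc j + w - 1) * (1/2)
              * log 2 (1 + \<gamma> * (if 1 \<le> Suc j \<and> Suc j \<le> N then \<eta> (Suc j) else 0)))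
      = (\<Sum>j<N. p * (1-p)^(Suc j + w - 1) * (1/2) * log 2 (1 + \<gamma> * \<eta> (Suc j)))"
    by (subst suminf_finite[of "{..<N}"]) auto
  also have "\<dots> = (\<Sum>j=1..N. p * (1-p)^(w-1) / (2 * ln 2) * ((1-p)^j * ln (1 + \<gamma> * \<eta> j)))"
    using assms by (cases w) (simp_all add: sum.atLeast1_atMost_eq log_def power_add mult_ac)
  finally show ?thesis by (simp add: sum_distrib_left)
qed

lemma T_inf_residual_series:
  assumes "0 < p" "p < 1" "1 \<le> w" "1 \<le> N"
  shows "(\<Sum>k. p\<^sup>2 * (1-p)^(Suc k + w - 1) * (real w / 2)
              * log 2 (1 + \<gamma> * (B - psum \<eta> (min (Suc k) N)) / real w))
       = p * (1-p)^(w-1) / (2 * ln 2) * (real w *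
           ((\<Sum>k=1..N-1. p * (1-p)^k * ln (1 + \<gamma> * (B - psum \<eta> k) / real w))
            + (1-p)^N * ln (1 + \<gamma> * (B - psum \<eta> N) / real w)))"
proof -
  define a where "a k = ln (1 + \<gamma> * (B - psum \<eta> k) / real w)" for k
  define C where "C = p * (1-p)^(w-1) / (2 * ln 2) * real w"
  have "(\<Sum>k. p\<^sup>2 * (1-p)^(Suc k + w - 1) * (real w / 2)
              * log 2 (1 + \<gamma> * (B - psum \<eta> (min (Suc k) N)) / real w))
      = (\<Sum>k. C * (p * (1-p)^Suc k * a (min (Suc k) N)))"
    using assms(3) by (cases w) (simp_all add: C_def a_def log_def power_add power2_eq_square mult_ac)
  also have "\<dots> = C * ((\<Sum>k=1..N-1. p * (1-p)^k * a k) + (1-p)^N * a N)"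
    by (rule sums_unique[OF sums_mult[OF geometric_weights_truncated_sums[OF assms(1,2,4)]],
        symmetric])
  finally show ?thesis by (simp add: C_def a_def mult_ac)
qed

lemma T_N_eq_log_objective:
  assumes "0 < p" "p < 1" "1 \<le> w" "1 \<le> N"
  shows "T_N p \<gamma> B w N \<eta> =
    (\<Sum>k=1..w. p\<^sup>2 * (1 - p) ^ (k - 1) * (real k / 2) * log 2 (1 + \<gamma> * B / real k))
    + p * (1-p)^(w-1) / (2 * ln 2) * log_objective p \<gamma> B w N \<eta>"
  unfolding T_N_def T_inf_def psum_truncation log_objective_def
    T_inf_rate_series[OF assms(3)] T_inf_residual_series[OF assms]
  by (simp add: algebra_simps)

definition log_objective_dderiv ::
    "real \<Rightarrow> real \<Rightarrow> real \<Rightarrow> nat \<Rightarrow> nat \<Rightarrow> (nat \<Rightarrow> real) \<Rightarrow> (nat \<Rightarrow> real) \<Rightarrow> real" where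
  "log_objective_dderiv p \<gamma> B w N \<xi> v =
     (\<Sum>j=1..N. (1-p)^j * \<gamma> * v j / (1 + \<gamma> * \<xi> j))
     - (\<Sum>k=1..N-1. p * (1-p)^k * \<gamma> * psum v k / (1 + \<gamma> * (B - psum \<xi> k) / real w))
     - (1-p)^N * \<gamma> * psum v N / (1 + \<gamma> * (B - psum \<xi> N) / real w)"

lemma log_objective_has_directional_derivative:
  assumes "0 < w"
    and "\<And>j. j \<in> {1..N} \<Longrightarrow> 0 < 1 + \<gamma> * \<xi> j"
    and "\<And>k. k \<le> N \<Longrightarrow> 0 < 1 + \<gamma> * (B - psum \<xi> k) / real w"
  shows "((\<lambda>t. log_objective p \<gamma> B w N (\<lambda>i. \<xi> i + t * v i)) has_real_derivative
           log_objective_dderiv p \<gamma> B w N \<xi> v) (at 0)"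
proof -
  have rate: "((\<lambda>t. c * ln (1 + \<gamma> * (x + t * y))) has_real_derivative c * \<gamma> * y / (1 + \<gamma> * x)) (at 0)"
    if "0 < 1 + \<gamma> * x" for c x y
    using that by (auto intro!: derivative_eq_intros)
  have residual: "((\<lambda>t. real w * (c * ln (1 + \<gamma> * (B - (x + t * y)) / real w))) has_real_derivative
      - (c * \<gamma> * y / (1 + \<gamma> * (B - x) / real w))) (at 0)"
    if "0 < 1 + \<gamma> * (B - x) / real w" for c x y
    using that assms(1) by (auto intro!: derivative_eq_intros simp: field_simps)
  have "((\<lambda>t. log_objective p \<gamma> B w N (\<lambda>i. \<xi> i + t * v i)) has_real_derivative
     (\<Sum>j=1..N. (1-p)^j * \<gamma> * v j / (1 + \<gamma> * \<xi> j))
     + ((\<Sum>k=1..N-1. - (p * (1-p)^k * \<gamma> * psum v k / (1 + \<gamma> * (B - psum \<xi> k) / real w)))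
     + - ((1-p)^N * \<gamma> * psum v N / (1 + \<gamma> * (B - psum \<xi> N) / real w)))) (at 0)"
    unfolding log_objective_def psum_line distrib_left[of "real w"] sum_distrib_left[of "real w"]
    by (intro DERIV_add DERIV_sum rate residual) (use assms(2,3) in auto)
  then show ?thesis
    unfolding log_objective_dderiv_def by (simp only: sum_negf diff_conv_add_uminus add.assoc)
qed

lemma psum_indicator:
  "1 \<le> n \<Longrightarrow> psum (indicator {n}) k = (if n \<le> k then 1 else 0)"
  by (simp add: psum_def indicator_def sum.delta')

lemma psum_diff: "psum (f - g) k = psum f k - psum g k"
  by (simp add: psum_def sum_subtractf)

lemma psum_shift_direction:
  "1 \<le> j \<Longrightarrow> psum (indicator {j} - indicator {Suc j}) k = (if k = j then 1 else 0)"
  by (simp add: psum_diff psum_indicator)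

lemma sum_indicator_weighted:
  fixes c d :: "'a \<Rightarrow> 'b::field"
  assumes "finite A"
  shows "(\<Sum>i\<in>A. c i * indicator {n} i / d i) = (if n \<in> A then c n / d n else 0)"
proof -
  have "(\<Sum>i\<in>A. c i * indicator {n} i / d i) = (\<Sum>i\<in>A. if i = n then c n / d n else 0)"
    by (rule sum.cong) (auto simp: indicator_def)
  then show ?thesis using assms by (simp add: sum.delta')
qed

lemma log_objective_dderiv_last:
  assumes "1 \<le> N"
  shows "log_objective_dderiv p \<gamma> B w N \<xi> (indicator {N})
       = (1-p)^N * \<gamma> * (1 / (1 + \<gamma> * \<xi> N) - 1 / (1 + \<gamma> * (B - psum \<xi> N) / real w))"
proof -
  have "(\<Sum>k=1..N-1. p * (1-p)^k * \<gamma> * psum (indicator {N}) k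
          / (1 + \<gamma> * (B - psum \<xi> k) / real w)) = 0"
    by (rule sum.neutral) (auto simp: psum_indicator[OF assms])
  moreover have "(\<Sum>i=1..N. (1-p)^i * \<gamma> * indicator {N} i / (1 + \<gamma> * \<xi> i))
      = (1-p)^N * \<gamma> / (1 + \<gamma> * \<xi> N)"
    using assms by (simp add: sum_indicator_weighted)
  ultimately show ?thesis
    using assms
    by (simp add: log_objective_dderiv_def psum_indicator diff_divide_distrib right_diff_distrib)
qed

lemma log_objective_dderiv_shift:
  assumes "1 \<le> j" "j < N"
  shows "log_objective_dderiv p \<gamma> B w N \<xi> (indicator {j} - indicator {Suc j})
       = (1-p)^j * \<gamma> * (1 / (1 + \<gamma> * \<xi> j) - (1-p) / (1 + \<gamma> * \<xi> (Suc j))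
                           - p / (1 + \<gamma> * (B - psum \<xi> j) / real w))"
proof -
  have rate: "(\<Sum>i=1..N. (1-p)^i * \<gamma> * (indicator {j} - indicator {Suc j}) i / (1 + \<gamma> * \<xi> i))
      = (1-p)^j * \<gamma> / (1 + \<gamma> * \<xi> j) - (1-p)^Suc j * \<gamma> / (1 + \<gamma> * \<xi> (Suc j))"
    (is "?lhs = _")
  proof -
    have "?lhs = (\<Sum>i=1..N. (1-p)^i * \<gamma> * indicator {j} i / (1 + \<gamma> * \<xi> i))
        - (\<Sum>i=1..N. (1-p)^i * \<gamma> * indicator {Suc j} i / (1 + \<gamma> * \<xi> i))"
      by (simp add: right_diff_distrib diff_divide_distrib sum_subtractf)
    then show ?thesis using assms by (simp add: sum_indicator_weighted)
  qed
  have residual: "(\<Sum>k=1..N-1. p * (1-p)^k * \<gamma> * psum (indicator {j} - indicator {Suc j}) k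
          / (1 + \<gamma> * (B - psum \<xi> k) / real w))
      = p * (1-p)^j * \<gamma> / (1 + \<gamma> * (B - psum \<xi> j) / real w)"
    (is "?lhs = _")
  proof -
    have "?lhs = (\<Sum>k=1..N-1. p * (1-p)^k * \<gamma> * indicator {j} k
                   / (1 + \<gamma> * (B - psum \<xi> k) / real w))"
      by (rule sum.cong) (simp_all add: psum_shift_direction[OF assms(1)] indicator_def)
    then show ?thesis using assms by (simp add: sum_indicator_weighted)
  qed
  show ?thesis
    using assms unfolding log_objective_dderiv_def rate residual
    by (simp add: psum_shift_direction right_diff_distrib mult_ac)
qed

lemma feasible_N_line:
  "feasible_N B N (\<lambda>i. \<xi> i + t * v i) \<longleftrightarrow>
     (\<forall>j\<in>{1..N}. 0 \<le> \<xi> j + t * v j) \<and> psum \<xi> N + t * psum v N \<le> B"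
  unfolding feasible_N_def psum_line[symmetric] by (simp add: psum_def)

lemma inverse_one_plus_less_1: "0 < (x::real) \<Longrightarrow> 1 / (1 + x) < 1"
  by simp

lemma inverse_one_plus_le_1: "0 \<le> (x::real) \<Longrightarrow> 1 / (1 + x) \<le> 1"
  by simp

lemma mult_le_0_iff_pos: "0 < (c::real) \<Longrightarrow> c * x \<le> 0 \<longleftrightarrow> x \<le> 0"
  by (simp add: mult_le_0_iff)

lemma zero_le_mult_iff_pos: "0 < (c::real) \<Longrightarrow> 0 \<le> c * x \<longleftrightarrow> 0 \<le> x"
  by (simp add: zero_le_mult_iff)

locale T_N_maximizer =
  fixes p \<gamma> B :: real and w N :: nat and \<xi> :: "nat \<Rightarrow> real"
  assumes p_pos: "0 < p" and p_less_1: "p < 1" and \<gamma>_pos: "0 < \<gamma>" and B_pos: "0 < B"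
    and w_ge_1: "1 \<le> w" and N_ge_1: "1 \<le> N"
    and maximizer: "is_maximizer_N p \<gamma> B w N \<xi>"
begin

lemma nonneg: "j \<in> {1..N} \<Longrightarrow> 0 \<le> \<xi> j"
  using maximizer by (simp add: is_maximizer_N_def feasible_N_def)

lemma psum_le_budget: "k \<le> N \<Longrightarrow> psum \<xi> k \<le> B"
proof -
  assume "k \<le> N"
  then have "psum \<xi> k \<le> psum \<xi> N"
    unfolding psum_def by (intro sum_mono2) (auto intro: nonneg)
  also have "\<dots> \<le> B"
    using maximizer by (simp add: is_maximizer_N_def feasible_N_def psum_def)
  finally show ?thesis .
qed

lemma log_objective_le:
  "feasible_N B N \<eta> \<Longrightarrow> log_objective p \<gamma> B w N \<eta> \<le> log_objective p \<gamma> B w N \<xi>"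
proof -
  define K where "K = p * (1-p)^(w-1) / (2 * ln 2)"
  assume "feasible_N B N \<eta>"
  then have "T_N p \<gamma> B w N \<eta> \<le> T_N p \<gamma> B w N \<xi>"
    using maximizer by (simp add: is_maximizer_N_def)
  then have "K * log_objective p \<gamma> B w N \<eta> \<le> K * log_objective p \<gamma> B w N \<xi>"
    unfolding T_N_eq_log_objective[OF p_pos p_less_1 w_ge_1 N_ge_1] K_def by simp
  moreover have "0 < K"
    using p_pos p_less_1 by (simp add: K_def)
  ultimately show ?thesis by (rule mult_left_le_imp_le)
qed

lemma has_directional_derivative:
  "((\<lambda>t. log_objective p \<gamma> B w N (\<lambda>i. \<xi> i + t * v i)) has_real_derivative
     log_objective_dderiv p \<gamma> B w N \<xi> v) (at 0)"
proof (rule log_objective_has_directional_derivative)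
  show "0 < w" using w_ge_1 by simp
  show "0 < 1 + \<gamma> * \<xi> j" if "j \<in> {1..N}" for j
    using nonneg[OF that] \<gamma>_pos by (simp add: add_pos_nonneg)
  show "0 < 1 + \<gamma> * (B - psum \<xi> k) / real w" if "k \<le> N" for k
    using psum_le_budget[OF that] \<gamma>_pos by (simp add: add_pos_nonneg)
qed

lemma dderiv_nonpos:
  assumes "0 < \<delta>" "\<And>t. 0 < t \<Longrightarrow> t < \<delta> \<Longrightarrow> feasible_N B N (\<lambda>i. \<xi> i + t * v i)"
  shows "log_objective_dderiv p \<gamma> B w N \<xi> v \<le> 0"
  by (rule DERIV_nonpos_at_right_max[OF has_directional_derivative assms(1)])
    (simp add: assms(2) log_objective_le)

lemma dderiv_nonneg:
  assumes "0 < \<delta>" "\<And>t. 0 < t \<Longrightarrow> t < \<delta> \<Longrightarrow> feasible_N B N (\<lambda>i. \<xi> i - t * v i)"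
  shows "0 \<le> log_objective_dderiv p \<gamma> B w N \<xi> v"
  by (rule DERIV_nonneg_at_left_max[OF has_directional_derivative assms(1)])
    (simp add: assms(2) log_objective_le)

lemma foc_last_increase:
  assumes "psum \<xi> N < B"
  shows "1 / (1 + \<gamma> * \<xi> N) \<le> 1 / (1 + \<gamma> * (B - psum \<xi> N) / real w)"
proof -
  have "log_objective_dderiv p \<gamma> B w N \<xi> (indicator {N}) \<le> 0"
  proof (rule dderiv_nonpos)
    show "0 < B - psum \<xi> N" using assms by simp
    show "feasible_N B N (\<lambda>i. \<xi> i + t * indicator {N} i)" if "0 < t" "t < B - psum \<xi> N" for t
      using that nonneg unfolding feasible_N_line psum_indicator[OF N_ge_1]
      by (auto simp: indicator_def)
  qed
  moreover have "0 < (1-p)^N * \<gamma>" using p_less_1 \<gamma>_pos by simp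
  ultimately show ?thesis
    unfolding log_objective_dderiv_last[OF N_ge_1] by (simp add: mult_le_0_iff_pos)
qed

lemma foc_last_decrease:
  assumes "0 < \<xi> N"
  shows "1 / (1 + \<gamma> * (B - psum \<xi> N) / real w) \<le> 1 / (1 + \<gamma> * \<xi> N)"
proof -
  have "0 \<le> log_objective_dderiv p \<gamma> B w N \<xi> (indicator {N})"
  proof (rule dderiv_nonneg)
    show "0 < \<xi> N" by (rule assms)
    show "feasible_N B N (\<lambda>i. \<xi> i - t * indicator {N} i)" if "0 < t" "t < \<xi> N" for t
      using that nonneg psum_le_budget[of N]
      unfolding feasible_N_line[of _ _ _ "- t", simplified] psum_indicator[OF N_ge_1]
      by (auto simp: indicator_def)
  qed
  moreover have "0 < (1-p)^N * \<gamma>" using p_less_1 \<gamma>_pos by simp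
  ultimately show ?thesis
    unfolding log_objective_dderiv_last[OF N_ge_1] by (simp add: zero_le_mult_iff_pos)
qed

lemma foc_shift_forward:
  assumes "1 \<le> j" "j < N" "0 < \<xi> j"
  shows "(1-p) / (1 + \<gamma> * \<xi> (Suc j)) + p / (1 + \<gamma> * (B - psum \<xi> j) / real w)
           \<le> 1 / (1 + \<gamma> * \<xi> j)"
proof -
  have next_nonneg: "0 \<le> \<xi> (Suc j)" using assms(2) by (intro nonneg) simp
  have "0 \<le> log_objective_dderiv p \<gamma> B w N \<xi> (indicator {j} - indicator {Suc j})"
  proof (rule dderiv_nonneg)
    show "0 < \<xi> j" by (rule assms(3))
    show "feasible_N B N (\<lambda>i. \<xi> i - t * (indicator {j} - indicator {Suc j}) i)"
      if "0 < t" "t < \<xi> j" for t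
      using that assms next_nonneg nonneg psum_le_budget[of N]
      unfolding feasible_N_line[of _ _ _ "- t", simplified] psum_shift_direction[OF assms(1)]
      by (auto simp: indicator_def) (use next_nonneg that in linarith)
  qed
  moreover have "0 < (1-p)^j * \<gamma>" using p_less_1 \<gamma>_pos by simp
  ultimately show ?thesis
    unfolding log_objective_dderiv_shift[OF assms(1,2)] by (simp add: zero_le_mult_iff_pos)
qed

lemma foc_shift_backward:
  assumes "1 \<le> j" "j < N" "0 < \<xi> (Suc j)"
  shows "1 / (1 + \<gamma> * \<xi> j)
           \<le> (1-p) / (1 + \<gamma> * \<xi> (Suc j)) + p / (1 + \<gamma> * (B - psum \<xi> j) / real w)"
proof -
  have "log_objective_dderiv p \<gamma> B w N \<xi> (indicator {j} - indicator {Suc j}) \<le> 0"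
  proof (rule dderiv_nonpos)
    show "0 < \<xi> (Suc j)" by (rule assms(3))
    show "feasible_N B N (\<lambda>i. \<xi> i + t * (indicator {j} - indicator {Suc j}) i)"
      if "0 < t" "t < \<xi> (Suc j)" for t
      using that assms nonneg psum_le_budget[of N]
      unfolding feasible_N_line psum_shift_direction[OF assms(1)]
      by (auto simp: indicator_def)
  qed
  moreover have "0 < (1-p)^j * \<gamma>" using p_less_1 \<gamma>_pos by simp
  ultimately show ?thesis
    unfolding log_objective_dderiv_shift[OF assms(1,2)] by (simp add: mult_le_0_iff_pos)
qed

lemma exhausted_prefix_ends_in_zero:
  assumes "1 \<le> j" "j \<le> N" "psum \<xi> j = B"
  shows "\<xi> j = 0"
proof (rule ccontr)
  assume "\<xi> j \<noteq> 0"
  with nonneg[of j] assms(1,2) have pos: "0 < \<xi> j" by simp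
  then have below_1: "1 / (1 + \<gamma> * \<xi> j) < 1"
    using \<gamma>_pos by (intro inverse_one_plus_less_1) simp
  show False
  proof (cases "j = N")
    case True
    then show False using foc_last_decrease pos below_1 assms(3) by simp
  next
    case False
    with assms(2) have "j < N" by simp
    have "psum \<xi> j + \<xi> (Suc j) = psum \<xi> (Suc j)" by (simp add: psum_def)
    also have "\<dots> \<le> B" using \<open>j < N\<close> by (intro psum_le_budget) simp
    finally have "\<xi> (Suc j) = 0" using nonneg[of "Suc j"] \<open>j < N\<close> assms(3) by simp
    then show False
      using foc_shift_forward[OF assms(1) \<open>j < N\<close> pos] below_1 assms(3) by simp
  qed
qed

lemma budget_slack: "psum \<xi> N < B"
proof (rule ccontr)
  assume "\<not> psum \<xi> N < B"
  then have tight: "psum \<xi> N = B" using psum_le_budget[of N] by simp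
  have "psum \<xi> (N - k) = B" for k
  proof (induction k)
    case 0
    then show ?case using tight by simp
  next
    case (Suc k)
    show ?case
    proof (cases "N - k = 0")
      case True
      then show ?thesis using Suc.IH by simp
    next
      case False
      then have "N - k = Suc (N - Suc k)" by simp
      moreover have "\<xi> (N - k) = 0"
        using False Suc.IH by (intro exhausted_prefix_ends_in_zero) auto
      ultimately show ?thesis using Suc.IH by (simp add: psum_def)
    qed
  qed
  from this[of N] show False using B_pos by (simp add: psum_def)
qed

lemma last_pos: "0 < \<xi> N"
proof (rule ccontr)
  assume "\<not> 0 < \<xi> N"
  then have "\<xi> N = 0" using nonneg[of N] N_ge_1 by simp
  moreover have "1 / (1 + \<gamma> * (B - psum \<xi> N) / real w) < 1"
    using budget_slack \<gamma>_pos w_ge_1 by (intro inverse_one_plus_less_1) simp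
  ultimately show False using foc_last_increase[OF budget_slack] by simp
qed

lemma last_eq_residual_share: "\<xi> N = (B - psum \<xi> N) / real w"
proof -
  have "1 / (1 + \<gamma> * \<xi> N) = 1 / (1 + \<gamma> * (B - psum \<xi> N) / real w)"
    using foc_last_increase[OF budget_slack] foc_last_decrease[OF last_pos] by simp
  then have "\<gamma> * \<xi> N = \<gamma> * ((B - psum \<xi> N) / real w)" by simp
  then show ?thesis using \<gamma>_pos by (simp only: mult_cancel_left) simp
qed

lemma zero_propagates:
  assumes "1 \<le> k" "k < N" "\<xi> k = 0"
  shows "\<xi> (Suc k) = 0"
proof (rule ccontr)
  assume "\<xi> (Suc k) \<noteq> 0"
  then have pos: "0 < \<xi> (Suc k)" using nonneg[of "Suc k"] assms(2) by simp
  have "1 / (1 + \<gamma> * \<xi> (Suc k)) < 1"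
    using pos \<gamma>_pos by (intro inverse_one_plus_less_1) simp
  then have "(1-p) * (1 / (1 + \<gamma> * \<xi> (Suc k))) < (1 - p) * 1"
    using p_less_1 by (intro mult_strict_left_mono) simp_all
  moreover have "1 / (1 + \<gamma> * (B - psum \<xi> k) / real w) \<le> 1"
    using psum_le_budget[of k] assms(2) \<gamma>_pos by (intro inverse_one_plus_le_1) simp
  then have "p * (1 / (1 + \<gamma> * (B - psum \<xi> k) / real w)) \<le> p * 1"
    using p_pos by (intro mult_left_mono) simp_all
  ultimately show False
    using foc_shift_backward[OF assms(1,2) pos] assms(3) by simp
qed

lemma pos: "j \<in> {1..N} \<Longrightarrow> 0 < \<xi> j"
proof (rule ccontr)
  assume j: "j \<in> {1..N}" and "\<not> 0 < \<xi> j"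
  then have "\<xi> j = 0" using nonneg[of j] by simp
  have "j \<le> N" using j by simp
  then have "\<xi> N = 0"
  proof (induction rule: dec_induct)
    case base
    show ?case by fact
  next
    case (step n)
    then show ?case using j by (intro zero_propagates) auto
  qed
  then show False using last_pos by simp
qed

lemma consecutive_eq:
  assumes "1 \<le> j" "j < N"
  shows "(1 - p) / (1 + \<gamma> * \<xi> (Suc j))
           = 1 / (1 + \<gamma> * \<xi> j) - p / (1 + \<gamma> * (B - psum \<xi> j) / real w)"
  using foc_shift_forward[OF assms pos] foc_shift_backward[OF assms pos] assms by simp

end

theorem lemma6:
  fixes p \<gamma> B :: real and w N :: nat and \<xi> :: "nat \<Rightarrow> real"
  assumes "0 < p" "p < 1" "0 < \<gamma>" "0 < B" "1 \<le> w" "1 \<le> N"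
    and "is_maximizer_N p \<gamma> B w N \<xi>"
  shows "\<xi> N = (B - (\<Sum>i=1..N. \<xi> i)) / real w \<and>
    (\<forall>j\<in>{1..N-1}. (1 - p) / (1 + \<gamma> * \<xi> (j+1))
           = 1 / (1 + \<gamma> * \<xi> j) - p / (1 + (\<gamma> / real w) * (B - (\<Sum>i=1..j. \<xi> i))))"
proof -
  interpret T_N_maximizer p \<gamma> B w N \<xi>
    using assms by unfold_locales
  show ?thesis
    using last_eq_residual_share consecutive_eq by (auto simp: psum_def)
qed

end
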